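(* Let $u_0 \ge 1$ and $r \ge 1$ be integers with $\gcd(u_0, r) = 1$, let $u_k := u_0 + kr$ for $k \ge 0$, and for an integer $n \ge 0$ let $L_n := \operatorname{lcm}\{u_0, u_1, \ldots, u_n\}$. Let $a \ge 2$ be any given integer. Then for any integers $\alpha \ge a$, $r \ge a$ and $n \ge 2\alpha r$, we have $$L_n \ge u_0\, r^{\alpha + a - 2}\,(r+1)^n.$$
   Context: The arithmetic progression is $u_k = u_0 + kr$ with $u_0, r$ positive coprime integers; $L_n$ is the least common multiple of its first $n+1$ terms $u_0,\dots,u_n$. *)

theory Defs
  imports Main
begin

definition ap_term :: "nat \<Rightarrow> nat \<Rightarrow> nat \<Rightarrow> nat" where
  "ap_term u0 r k = u0 + k * r"

definition ap_lcm :: "nat \<Rightarrow> nat \<Rightarrow> nat \<Rightarrow> nat" where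
  "ap_lcm u0 r n = Lcm ((ap_term u0 r) ` {0..n})"

end

theory Submission
  imports Defs Complex_Main
begin

text \<open>
  The partial fraction expansion
  \<open>\<Sum>i\<le>m. (-1)^i (m choose i) / (x + i r) = m! r^m / \<Prod>i\<le>m. (x + i r)\<close>
  shows that every block \<open>u_k \<cdots> u_(k+m)\<close> with \<open>k + m \<le> n\<close> divides \<open>L_n m! r^m\<close>.
  The block is coprime to \<open>r\<close>, so it even divides \<open>L_n m! / r^e\<close> whenever \<open>r^e\<close> divides
  \<open>m!\<close>; hence \<open>L_n \<ge> r^e u_k \<cdots> u_(k+m) / m!\<close>. Passing from \<open>(k, m)\<close> to \<open>(k + 1, m + r)\<close>
  multiplies the quotient \<open>u_k \<cdots> u_(k+m) / m!\<close> by at least \<open>(r+1)^(r+1)\<close>, by AM-GM.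
  Writing \<open>n = k (r+1) + j\<close> with \<open>j \<le> r\<close> and taking \<open>m = j + k r\<close> therefore gives
  \<open>L_n \<ge> u_0 (r+1)^n r^(e-1)\<close> with \<open>e = \<lfloor>m/r\<rfloor> + \<lfloor>m/r^2\<rfloor>\<close>, and the hypotheses on
  \<open>\<alpha>\<close>, \<open>a\<close> and \<open>n\<close> make \<open>e \<ge> \<alpha> + a - 1\<close>.
\<close>

lemma ap_term_dvd_ap_lcm: "k \<le> n \<Longrightarrow> ap_term u0 r k dvd ap_lcm u0 r n"
  unfolding ap_lcm_def by (rule dvd_Lcm) simp

lemma ap_lcm_pos: "u0 \<ge> 1 \<Longrightarrow> ap_lcm u0 r n > 0"
  unfolding ap_lcm_def ap_term_def by (subst neq0_conv[symmetric]) (auto simp: Lcm_0_iff_nat)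

lemma alternating_binomial_sum_Suc:
  fixes x r :: "'a::field"
  shows "(\<Sum>i\<le>Suc m. (-1)^i * of_nat (Suc m choose i) / (x + of_nat i * r))
    = (\<Sum>i\<le>m. (-1)^i * of_nat (m choose i) / (x + of_nat i * r))
      - (\<Sum>i\<le>m. (-1)^i * of_nat (m choose i) / (x + r + of_nat i * r))"
proof -
  have "(\<Sum>i\<le>Suc m. (-1)^i * of_nat (Suc m choose i) / (x + of_nat i * r))
      = 1/x + (\<Sum>i\<le>m. (-1)^Suc i * of_nat (m choose Suc i) / (x + of_nat (Suc i) * r))
        + (\<Sum>i\<le>m. (-1)^Suc i * of_nat (m choose i) / (x + of_nat (Suc i) * r))"
    by (subst sum.atMost_Suc_shift)
      (simp add: sum.distrib[symmetric] add_divide_distrib ring_distribs,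
        auto intro!: sum.cong simp: diff_divide_distrib)
  also have "1/x + (\<Sum>i\<le>m. (-1)^Suc i * of_nat (m choose Suc i) / (x + of_nat (Suc i) * r))
      = (\<Sum>i\<le>Suc m. (-1)^i * of_nat (m choose i) / (x + of_nat i * r))"
    by (subst sum.atMost_Suc_shift) simp
  also have "\<dots> = (\<Sum>i\<le>m. (-1)^i * of_nat (m choose i) / (x + of_nat i * r))"
    by (simp add: binomial_eq_0)
  also have "(\<Sum>i\<le>m. (-1)^Suc i * of_nat (m choose i) / (x + of_nat (Suc i) * r))
      = - (\<Sum>i\<le>m. (-1)^i * of_nat (m choose i) / (x + r + of_nat i * r))"
    by (simp add: sum_negf[symmetric] algebra_simps)
  finally show ?thesis by simp
qed

lemma alternating_binomial_partial_fractions: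
  fixes x r :: "'a::field_char_0"
  assumes "\<And>i. i \<le> m \<Longrightarrow> x + of_nat i * r \<noteq> 0"
  shows "(\<Sum>i\<le>m. (-1)^i * of_nat (m choose i) / (x + of_nat i * r))
    = fact m * r^m / (\<Prod>i\<le>m. x + of_nat i * r)"
  using assms
proof (induction m arbitrary: x)
  case 0
  then show ?case by simp
next
  case (Suc m)
  define P where "P = (\<Prod>i\<le>Suc m. x + of_nat i * r)"
  have P: "P \<noteq> 0" unfolding P_def using Suc.prems by (simp del: of_nat_Suc)
  have last: "x + of_nat (Suc m) * r \<noteq> 0" using Suc.prems[of "Suc m"] by simp
  have x: "x \<noteq> 0" using Suc.prems[of 0] by simp
  have init: "(\<Prod>i\<le>m. x + of_nat i * r) = P / (x + of_nat (Suc m) * r)"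
    unfolding P_def using last by simp
  have tail: "(\<Prod>i\<le>m. x + r + of_nat i * r) = P / x"
    unfolding P_def using x by (subst prod.atMost_Suc_shift) (simp add: algebra_simps)
  have "(\<Sum>i\<le>Suc m. (-1)^i * of_nat (Suc m choose i) / (x + of_nat i * r))
      = fact m * r^m / (P / (x + of_nat (Suc m) * r)) - fact m * r^m / (P / x)"
    unfolding alternating_binomial_sum_Suc init[symmetric] tail[symmetric]
    using Suc.prems Suc.IH[of x] Suc.IH[of "x + r"] Suc.prems[of "Suc _"]
    by (simp add: algebra_simps)
  also have "\<dots> = fact (Suc m) * r ^ Suc m / P"
    using P last x by (simp add: field_simps)
  finally show ?case unfolding P_def .
qed

lemma prod_ap_dvd_mult_fact_power:
  fixes x r L :: nat
  assumes x: "x > 0" and dvd: "\<And>i. i \<le> m \<Longrightarrow> x + i * r dvd L"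
  shows "(\<Prod>i\<le>m. x + i * r) dvd L * fact m * r ^ m"
proof -
  define P where "P = (\<Prod>i\<le>m. x + i * r)"
  have P: "real P = (\<Prod>i\<le>m. real x + real i * real r)" and "P > 0"
    unfolding P_def using x by auto
  \<comment> \<open>by the partial fraction expansion, this integer equals \<open>L m! r^m / P\<close>\<close>
  define N :: int where "N = (\<Sum>i\<le>m. (-1)^i * int (m choose i) * int (L div (x + i * r)))"
  have "real_of_int N = real L * (\<Sum>i\<le>m. (-1)^i * real (m choose i) / (real x + real i * real r))"
    unfolding N_def sum_distrib_left of_int_sum
    by (intro sum.cong) (auto simp: real_of_nat_div dvd)
  also have "\<dots> = real L * (fact m * real r ^ m / real P)"
    using x by (subst alternating_binomial_partial_fractions)
      (simp_all add: P add_nonneg_eq_0_iff)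
  finally have "real_of_int N * real P = real L * fact m * real r ^ m"
    using \<open>P > 0\<close> by (simp add: field_simps)
  then have "real_of_int (N * int P) = real_of_int (int (L * fact m * r ^ m))"
    by simp
  then have "N * int P = int (L * fact m * r ^ m)"
    by (simp only: of_int_eq_iff)
  then have "int P dvd int (L * fact m * r ^ m)" by (metis dvd_triv_right)
  then show ?thesis unfolding P_def by (simp only: int_dvd_int_iff)
qed

lemma power_mult_fact_dvd_fact: "r \<ge> 1 \<Longrightarrow> r ^ q * fact q dvd (fact (q * r) :: nat)"
proof (induction q)
  case 0
  then show ?case by simp
next
  case (Suc q)
  define s where "s = q * r + r"
  have "fact (q * r) dvd (fact (s - 1) :: nat)"
    unfolding s_def using Suc.prems by (intro fact_dvd) simp
  with Suc have "r ^ q * fact q dvd (fact (s - 1) :: nat)"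
    by (blast intro: dvd_trans)
  then have "r ^ q * fact q * s dvd fact (s - 1) * s"
    by (rule mult_dvd_mono) simp
  moreover have "fact s = fact (s - 1) * s"
    using Suc.prems fact_reduce[where 'a=nat, of s] by (simp add: s_def mult.commute)
  moreover have "r ^ Suc q * fact (Suc q) = r ^ q * fact q * s" "Suc q * r = s"
    unfolding s_def by (simp_all add: algebra_simps)
  ultimately show ?case by metis
qed

text \<open>
  The multiples of \<open>r\<close> up to \<open>m\<close> contribute \<open>r^\<lfloor>m/r\<rfloor> \<lfloor>m/r\<rfloor>!\<close> to \<open>m!\<close>, and \<open>\<lfloor>m/r\<rfloor>!\<close>
  contributes \<open>r^\<lfloor>m/r^2\<rfloor>\<close> in the same way.
\<close>

lemma power_dvd_fact: "r \<ge> 1 \<Longrightarrow> r ^ (m div r + m div r div r) dvd (fact m :: nat)"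
proof -
  assume r: "r \<ge> 1"
  have power_div_dvd: "r ^ (q div r) * fact (q div r) dvd (fact q :: nat)" for q
  proof -
    have "fact (q div r * r) dvd (fact q :: nat)"
      by (rule fact_dvd) (simp add: div_times_less_eq_dividend)
    with power_mult_fact_dvd_fact[OF r] show ?thesis by (blast intro: dvd_trans)
  qed
  have "r ^ (m div r) * r ^ (m div r div r) dvd r ^ (m div r) * (fact (m div r) :: nat)"
    using dvd_mult_left[OF power_div_dvd[of "m div r"]] by (rule mult_dvd_mono[OF dvd_refl])
  also have "\<dots> dvd fact m"
    by (rule power_div_dvd)
  finally show ?thesis
    by (simp only: power_add)
qed

lemma coprime_add_mult_self: "coprime x r \<Longrightarrow> coprime (x + i * r) (r::nat)"
  using gcd_add_mult[of r i x] by (simp add: coprime_iff_gcd_eq_1 gcd.commute add.commute)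

lemma prod_ap_mult_power_dvd:
  fixes x r L :: nat
  assumes "x > 0" and r: "r \<ge> 1" and "coprime x r"
    and "\<And>i. i \<le> m \<Longrightarrow> x + i * r dvd L"
  shows "(\<Prod>i\<le>m. x + i * r) * r ^ (m div r + m div r div r) dvd L * fact m"
proof -
  define P where "P = (\<Prod>i\<le>m. x + i * r)"
  define e where "e = m div r + m div r div r"
  have cop: "coprime P r"
    unfolding P_def using \<open>coprime x r\<close> by (intro prod_coprime_left coprime_add_mult_self)
  obtain c where c: "fact m = r ^ e * c"
    using power_dvd_fact[OF r, of m] unfolding e_def by blast
  have "P dvd L * fact m * r ^ m"
    unfolding P_def using prod_ap_dvd_mult_fact_power assms by blast
  then have "P dvd L * fact m"
    using cop by (simp add: coprime_dvd_mult_left_iff)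
  then have "P dvd (L * c) * r ^ e"
    unfolding c by (simp only: ac_simps)
  then have "P dvd L * c"
    using cop by (simp add: coprime_dvd_mult_left_iff)
  then have "P * r ^ e dvd L * c * r ^ e"
    by (rule mult_dvd_mono[OF _ dvd_refl])
  then show ?thesis
    unfolding P_def[symmetric] e_def[symmetric] c by (simp only: ac_simps)
qed

lemma amgm_with_ones:
  fixes t :: real
  assumes "t \<ge> 0"
  shows "(real r + 1) ^ (r + 1) * t \<le> (t + real r) ^ (r + 1)"
proof -
  define z where "z = (t - 1) / (real r + 1)"
  have "-1 \<le> z"
    using assms unfolding z_def by (simp add: field_simps)
  then have "1 + real (r + 1) * z \<le> (1 + z) ^ (r + 1)"
    by (rule Bernoulli_inequality)
  moreover have "1 + real (r + 1) * z = t" and "1 + z = (t + real r) / (real r + 1)"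
    unfolding z_def by (simp_all add: field_simps)
  ultimately have "t \<le> ((t + real r) / (real r + 1)) ^ (r + 1)"
    by simp
  then show ?thesis
    by (simp add: power_divide field_simps del: power_Suc)
qed

lemma power_mult_prod_le_prod_ap:
  fixes x :: real
  assumes x: "x \<ge> 0"
  shows "(real r + 1) ^ (r + 1) * x * (\<Prod>j<r. real (m + 1 + j))
    \<le> (\<Prod>j\<le>r. x + real (m + 1 + j) * real r)"
proof -
  define Y where "Y = real (m + 1 + r)"
  define t where "t = x / Y"
  have Y: "Y > 0" and t: "t \<ge> 0" and x_eq: "x = Y * t"
    unfolding t_def Y_def using x by auto
  have factor: "real (m + 1 + j) * (t + real r) \<le> x + real (m + 1 + j) * real r" if "j < r" for j
  proof -
    have "real (m + 1 + j) * t \<le> Y * t"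
      using that t unfolding Y_def by (intro mult_right_mono) auto
    then show ?thesis unfolding x_eq by (simp add: algebra_simps)
  qed
  have "(real r + 1) ^ (r + 1) * x * (\<Prod>j<r. real (m + 1 + j))
      = Y * ((real r + 1) ^ (r + 1) * t) * (\<Prod>j<r. real (m + 1 + j))"
    unfolding x_eq by simp
  also have "\<dots> \<le> Y * (t + real r) ^ (r + 1) * (\<Prod>j<r. real (m + 1 + j))"
    using Y amgm_with_ones[OF t] by (intro mult_right_mono mult_left_mono prod_nonneg) auto
  also have "\<dots> = (\<Prod>j<r. real (m + 1 + j) * (t + real r)) * (Y * (t + real r))"
    unfolding prod.distrib by (simp add: mult_ac)
  also have "\<dots> \<le> (\<Prod>j<r. x + real (m + 1 + j) * real r) * (x + Y * real r)"
    using factor Y t x_eq by (intro mult_mono prod_mono) (auto simp: algebra_simps intro: prod_nonneg)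
  also have "\<dots> = (\<Prod>j\<le>r. x + real (m + 1 + j) * real r)"
    unfolding Y_def by (simp add: lessThan_Suc_atMost[symmetric] algebra_simps)
  finally show ?thesis .
qed

definition ap_block :: "nat \<Rightarrow> nat \<Rightarrow> nat \<Rightarrow> nat \<Rightarrow> real" where
  "ap_block u0 r k m = (\<Prod>i\<le>m. real (ap_term u0 r (k + i))) / fact m"

lemma fact_add_eq_fact_mult_prod: "(fact (m + r) :: real) = fact m * (\<Prod>j<r. real (m + 1 + j))"
  by (induction r) (simp_all add: algebra_simps)

lemma prod_lessThan_add:
  fixes g :: "nat \<Rightarrow> 'a::comm_monoid_mult"
  shows "(\<Prod>i<m + n. g i) = (\<Prod>i<m. g i) * (\<Prod>j<n. g (m + j))"
  by (induction n) (simp_all add: mult_ac)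

lemma ap_block_step:
  "(real r + 1) ^ (r + 1) * ap_block u0 r k m \<le> ap_block u0 r (k + 1) (m + r)"
proof -
  define x where "x = real (ap_term u0 r k)"
  define Q where "Q = (\<Prod>i<m. real (ap_term u0 r (k + 1 + i)))"
  define D where "D = (\<Prod>j<r. real (m + 1 + j))"
  have x: "x \<ge> 0" and Q: "Q \<ge> 0" and D: "D > 0"
    unfolding x_def Q_def D_def by (auto intro: prod_nonneg prod_pos)
  have first: "(\<Prod>i\<le>m. real (ap_term u0 r (k + i))) = x * Q"
    unfolding x_def Q_def lessThan_Suc_atMost[symmetric] prod.lessThan_Suc_shift by simp
  have "(\<Prod>i\<le>m + r. real (ap_term u0 r (k + 1 + i)))
      = Q * (\<Prod>j\<le>r. real (ap_term u0 r (k + 1 + (m + j))))"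
    using prod_lessThan_add[of "\<lambda>i. real (ap_term u0 r (k + 1 + i))" m "Suc r"]
    unfolding Q_def lessThan_Suc_atMost[symmetric] by simp
  also have "(\<Prod>j\<le>r. real (ap_term u0 r (k + 1 + (m + j)))) = (\<Prod>j\<le>r. x + real (m + 1 + j) * real r)"
    unfolding x_def ap_term_def by (intro prod.cong) (auto simp: algebra_simps)
  finally have second: "(\<Prod>i\<le>m + r. real (ap_term u0 r (k + 1 + i)))
      = Q * (\<Prod>j\<le>r. x + real (m + 1 + j) * real r)" .
  have "(real r + 1) ^ (r + 1) * ap_block u0 r k m = Q * ((real r + 1) ^ (r + 1) * x * D) / (fact m * D)"
    unfolding ap_block_def first using D by (simp add: field_simps)
  also have "\<dots> \<le> Q * (\<Prod>j\<le>r. x + real (m + 1 + j) * real r) / (fact m * D)"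
    using power_mult_prod_le_prod_ap[OF x] Q D unfolding D_def
    by (intro divide_right_mono mult_left_mono) auto
  also have "\<dots> = ap_block u0 r (k + 1) (m + r)"
    unfolding ap_block_def fact_add_eq_fact_mult_prod D_def[symmetric] second[symmetric]
    by (simp add: add.assoc)
  finally show ?thesis .
qed

lemma ap_block_iterate:
  "(real r + 1) ^ (k * (r + 1)) * ap_block u0 r 0 j \<le> ap_block u0 r k (j + k * r)"
proof (induction k)
  case 0
  then show ?case by simp
next
  case (Suc k)
  have "(real r + 1) ^ (Suc k * (r + 1)) * ap_block u0 r 0 j
      = (real r + 1) ^ (r + 1) * ((real r + 1) ^ (k * (r + 1)) * ap_block u0 r 0 j)"
    by (simp add: power_add mult_ac)
  also have "\<dots> \<le> (real r + 1) ^ (r + 1) * ap_block u0 r k (j + k * r)"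
    using Suc.IH by (rule mult_left_mono) simp
  also have "\<dots> \<le> ap_block u0 r (Suc k) (j + Suc k * r)"
    using ap_block_step[of r u0 k "j + k * r"] by (simp add: algebra_simps)
  finally show ?case .
qed

lemma ap_block_Suc:
  "ap_block u0 r k (Suc m) = ap_block u0 r k m * (real (ap_term u0 r (k + Suc m)) / real (Suc m))"
  unfolding ap_block_def by (simp add: field_simps)

lemma ap_block_zero_Suc_ge:
  assumes "u0 \<ge> 1"
  shows "real u0 * (real r + 1) * real r ^ j \<le> ap_block u0 r 0 (Suc j)"
proof (induction j)
  case 0
  show ?case
    using assms by (simp add: ap_block_def ap_term_def algebra_simps mult_left_mono)
next
  case (Suc j)
  have "real r \<le> real (ap_term u0 r (0 + Suc (Suc j))) / real (Suc (Suc j))"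
    by (simp add: ap_term_def le_divide_eq algebra_simps)
  then have step: "ap_block u0 r 0 (Suc j) * real r \<le> ap_block u0 r 0 (Suc (Suc j))"
    unfolding ap_block_Suc[of u0 r 0 "Suc j"]
    by (rule mult_left_mono) (simp add: ap_block_def prod_nonneg)
  have "real u0 * (real r + 1) * real r ^ Suc j = real u0 * (real r + 1) * real r ^ j * real r"
    by (simp add: mult_ac)
  also have "\<dots> \<le> ap_block u0 r 0 (Suc j) * real r"
    using Suc.IH by (rule mult_right_mono) simp
  also note step
  finally show ?case .
qed

lemma Suc_power_mult_diff_le_power: "j \<le> r \<Longrightarrow> (r + 1) ^ j * (r - j) \<le> (r::nat) ^ (j + 1)"
proof (induction j)
  case 0
  then show ?case by simp
next
  case (Suc j)
  have "(r + 1) * (r - Suc j) \<le> r * (r - j)"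
    using Suc.prems by (simp add: algebra_simps diff_mult_distrib2)
  then have "(r + 1) ^ j * ((r + 1) * (r - Suc j)) \<le> (r + 1) ^ j * (r * (r - j))"
    by (rule mult_le_mono2)
  then have "(r + 1) ^ Suc j * (r - Suc j) \<le> r * ((r + 1) ^ j * (r - j))"
    by (simp only: power_Suc mult_ac)
  also have "\<dots> \<le> r * r ^ (j + 1)"
    using Suc by (intro mult_le_mono2) simp
  finally show ?case by simp
qed

lemma Suc_power_le_power_Suc: "j < r \<Longrightarrow> (r + 1) ^ j \<le> (r::nat) ^ (j + 1)"
proof -
  assume "j < r"
  then have "(r + 1) ^ j * 1 \<le> (r + 1) ^ j * (r - j)"
    by (intro mult_le_mono2) simp
  also have "\<dots> \<le> r ^ (j + 1)"
    using \<open>j < r\<close> by (intro Suc_power_mult_diff_le_power) simp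
  finally show ?thesis by simp
qed

lemma ap_block_zero_ge:
  assumes "u0 \<ge> 1" and "r \<ge> 1" and "j \<le> r"
  shows "real u0 * (real r + 1) ^ j \<le> ap_block u0 r 0 j * real r"
proof (cases j)
  case 0
  then show ?thesis
    using assms by (simp add: ap_block_def ap_term_def)
next
  case (Suc i)
  have "real ((r + 1) ^ i) \<le> real (r ^ (i + 1))"
    using Suc_power_le_power_Suc[of i r] assms Suc by (simp only: of_nat_le_iff)
  then have "(real r + 1) ^ j \<le> (real r + 1) * (real r ^ i * real r)"
    using Suc by (simp add: mult_left_mono mult.commute add.commute)
  then have "real u0 * (real r + 1) ^ j \<le> real u0 * (real r + 1) * real r ^ i * real r"
    by (simp add: mult_left_mono mult.assoc)
  also have "\<dots> \<le> ap_block u0 r 0 j * real r"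
    using ap_block_zero_Suc_ge[OF assms(1), of r i] Suc by (simp add: mult_right_mono)
  finally show ?thesis .
qed

lemma ap_block_mult_power_le_ap_lcm:
  assumes "u0 \<ge> 1" and "r \<ge> 1" and "coprime u0 r" and "k + m \<le> n"
  shows "ap_block u0 r k m * real r ^ (m div r + m div r div r) \<le> real (ap_lcm u0 r n)"
proof -
  define e where "e = m div r + m div r div r"
  define L where "L = ap_lcm u0 r n"
  have terms: "ap_term u0 r k + i * r = ap_term u0 r (k + i)" for i
    by (simp add: ap_term_def algebra_simps)
  have "ap_term u0 r k > 0"
    using assms(1) by (simp add: ap_term_def)
  then have "(\<Prod>i\<le>m. ap_term u0 r k + i * r) * r ^ e dvd L * fact m"
    unfolding e_def L_def using assms
    by (intro prod_ap_mult_power_dvd)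
      (auto simp: terms intro: ap_term_dvd_ap_lcm coprime_add_mult_self[unfolded ap_term_def[symmetric]])
  moreover have "L * fact m > 0"
    unfolding L_def using ap_lcm_pos[OF assms(1)] by simp
  ultimately have "(\<Prod>i\<le>m. ap_term u0 r (k + i)) * r ^ e \<le> L * fact m"
    unfolding terms by (rule dvd_imp_le)
  then have "(\<Prod>i\<le>m. real (ap_term u0 r (k + i))) * real r ^ e \<le> real L * fact m"
    by (metis of_nat_fact of_nat_le_iff of_nat_mult of_nat_power of_nat_prod)
  then show ?thesis
    unfolding ap_block_def e_def[symmetric] L_def[symmetric] by (simp add: field_simps)
qed

lemma exponent_bound:
  fixes a \<alpha> r n :: nat
  assumes "a \<ge> 2" and "\<alpha> \<ge> a" and "r \<ge> a" and "n \<ge> 2 * \<alpha> * r"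
  shows "\<alpha> + a - 1 \<le> n div (r + 1) + n div (r + 1) div r"
proof -
  define k where "k = n div (r + 1)"
  have k_ge: "c \<le> k" if "c * (r + 1) \<le> 2 * \<alpha> * r" for c
    unfolding k_def using that assms(4) by (simp add: less_eq_div_iff_mult_less_eq)
  consider "\<alpha> \<ge> r + 1" | "2 * \<alpha> \<le> r + 1" | "\<alpha> \<le> r" and "r + 1 < 2 * \<alpha>"
    by linarith
  then have "\<alpha> + a - 1 \<le> k + k div r"
  proof cases
    case 1
    then have "\<alpha> + r - 1 \<le> k"
      using assms by (intro k_ge) (auto simp: algebra_simps le_iff_add)
    then show ?thesis using assms by linarith
  next
    case 2
    then have "2 * \<alpha> - 1 \<le> k"
      using assms by (intro k_ge) (simp add: algebra_simps diff_mult_distrib)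
    then show ?thesis using assms by linarith
  next
    case 3
    then have k: "2 * \<alpha> - 2 \<le> k"
      using assms by (intro k_ge) (simp add: algebra_simps diff_mult_distrib)
    then have "1 \<le> k div r"
      using 3 assms by (simp add: less_eq_div_iff_mult_less_eq)
    then show ?thesis using k 3 assms by linarith
  qed
  then show ?thesis unfolding k_def .
qed

lemma ap_lcm_lower_bound:
  fixes u0 r j k :: nat
  assumes "u0 \<ge> 1" and "r \<ge> 1" and "coprime u0 r" and "j \<le> r"
  defines "m \<equiv> j + k * r"
  shows "real u0 * (real r + 1) ^ (k * (r + 1) + j) * real r ^ (m div r + m div r div r)
    \<le> real (ap_lcm u0 r (k * (r + 1) + j)) * real r"
proof -
  define e where "e = m div r + m div r div r"
  have "real u0 * (real r + 1) ^ (k * (r + 1) + j) * real r ^ e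
      = (real r + 1) ^ (k * (r + 1)) * (real u0 * (real r + 1) ^ j) * real r ^ e"
    by (simp add: power_add mult_ac)
  also have "\<dots> \<le> (real r + 1) ^ (k * (r + 1)) * (ap_block u0 r 0 j * real r) * real r ^ e"
    using ap_block_zero_ge[OF assms(1,2,4)] by (intro mult_left_mono mult_right_mono) auto
  also have "\<dots> = ((real r + 1) ^ (k * (r + 1)) * ap_block u0 r 0 j) * real r ^ e * real r"
    by (simp only: mult_ac)
  also have "\<dots> \<le> ap_block u0 r k m * real r ^ e * real r"
    unfolding m_def using ap_block_iterate by (intro mult_right_mono) auto
  also have "\<dots> \<le> real (ap_lcm u0 r (k * (r + 1) + j)) * real r"
    unfolding e_def using assms(1-3)
    by (intro mult_right_mono ap_block_mult_power_le_ap_lcm) (auto simp: m_def)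
  finally show ?thesis
    unfolding e_def .
qed

theorem theorem1p2:
  fixes u0 r a \<alpha> n :: nat
  assumes "u0 \<ge> 1" and "r \<ge> 1" and "coprime u0 r"
    and "a \<ge> 2" and "\<alpha> \<ge> a" and "r \<ge> a" and "n \<ge> 2 * \<alpha> * r"
  shows "ap_lcm u0 r n \<ge> u0 * r ^ (\<alpha> + a - 2) * (r + 1) ^ n"
proof -
  define k where "k = n div (r + 1)"
  define j where "j = n mod (r + 1)"
  define m where "m = j + k * r"
  define e where "e = m div r + m div r div r"
  have n: "n = k * (r + 1) + j"
    unfolding k_def j_def using div_mult_mod_eq[of n "r + 1"] by (simp add: algebra_simps)
  have "j \<le> r"
    unfolding j_def by simp
  have "k + k div r \<le> e"
    unfolding e_def m_def using assms(2) by (intro add_mono div_le_mono) (simp_all add: le_div_geq)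
  then have "(\<alpha> + a - 2) + 1 \<le> e"
    using exponent_bound[OF assms(4-7)] assms(4) unfolding k_def by linarith
  then have power_le: "real r ^ (\<alpha> + a - 2) * real r \<le> real r ^ e"
    using assms(2) power_increasing[of "\<alpha> + a - 2 + 1" e "real r"] by (simp add: mult.commute)
  have "real (u0 * r ^ (\<alpha> + a - 2) * (r + 1) ^ n) * real r
      = real u0 * (real r + 1) ^ n * (real r ^ (\<alpha> + a - 2) * real r)"
    by (simp add: mult_ac add.commute)
  also have "\<dots> \<le> real u0 * (real r + 1) ^ n * real r ^ e"
    using power_le by (rule mult_left_mono) simp
  also have "\<dots> \<le> real (ap_lcm u0 r n) * real r"
    using ap_lcm_lower_bound[OF assms(1-3) \<open>j \<le> r\<close>, of k]
    unfolding n[symmetric] m_def[symmetric] e_def[symmetric] .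
  finally have "real (u0 * r ^ (\<alpha> + a - 2) * (r + 1) ^ n) \<le> real (ap_lcm u0 r n)"
    by (rule mult_right_le_imp_le) (use assms(2) in simp)
  then show ?thesis
    by (simp only: of_nat_le_iff)
qed

end
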